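(* Let $n\ge1$, $m\ge1$ be integers, $q=\exp\bigl(\tfrac{2\pi i}{m+n+1}\bigr)$, and consider $$\partial^{n+1}y+(-1)^n\,(x^m+\lambda^{n+1})\,y=0,\qquad \partial=\tfrac{d}{dx},\ \lambda\in\mathbb{C}.$$ Let $y(x,\lambda)$ be a solution for each $\lambda$ (in the paper: the subdominant solution in the sector $|\arg x|\le\pi/(m+n+1)$), put $y_k(x,\lambda)=q^{nk/2}y(xq^{-k},\lambda q^k)$, and assume $y_k,\dots,y_{k+n}$ are linearly independent for every $k\in\mathbb{Z}$. Let $\Phi_k$ be the matrix with $(i+1,j+1)$ entry $\partial^iy_{k+j}$ ($0\le i,j\le n$), let $S^{(\ell)}_k$ ($\ell\ge1$) be defined by $\Phi_k=\Phi_{k+\ell}S^{(\ell)}_k$, let $S^{(\ell)}(\lambda)$ denote $S^{(\ell)}_0$ as a function of $\lambda$ (so $S^{(\ell)}_k=S^{(\ell)}(\lambda q^k)$) with entries $S^{(\ell)}_{i,j}(\lambda)$, and let $\tau^{(a)}(\lambda)=S^{(1)}_{a,1}(\lambda)$. Define $T^{(1)}_\ell(\lambda)=S^{(\ell)}_{1,1}(\lambda q^{-(\ell-1)/2})$ for $\ell\ge1$, $T^{(1)}_0=1$, $T^{(1)}_\ell=0$ for $\ell<0$, and $T^{(a)}_1(\lambda)=(-1)^{a+1}\tau^{(a)}(\lambda q^{-(a-1)/2})$ for $1\le a\le n+1$. Then for every $1\le a\le n+1$, $$T^{(a)}_1(\lambda)=\det_{1\le i,j\le a}\Bigl(T^{(1)}_{1-i+j}\bigl(\lambda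 q^{(i+j-a-1)/2}\bigr)\Bigr).$$
   Context: Fractional powers $q^{s}$ mean $\exp\bigl(\tfrac{2\pi i s}{m+n+1}\bigr)$. The matrices $S^{(\ell)}_k$ are (generalized) Stokes matrices connecting the fundamental systems of solutions $\Phi_k$ and $\Phi_{k+\ell}$, and $\tau^{(a)}$ are the Stokes multipliers (first column of $S^{(1)}$). *)

theory Defs
  imports "HOL-Analysis.Derivative" "Jordan_Normal_Form.Determinant"
begin

text \<open>Fractional powers of q: qp N s = exp(2 pi i s / N), here N = m+n+1.\<close>
definition qp :: "nat \<Rightarrow> real \<Rightarrow> complex" where
  "qp N s = exp (2 * of_real pi * \<i> * of_real s / of_nat N)"

definition yk :: "nat \<Rightarrow> nat \<Rightarrow> (complex \<Rightarrow> complex \<Rightarrow> complex) \<Rightarrow> int \<Rightarrow> complex \<Rightarrow> complex \<Rightarrow> complex" where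
  "yk n m y k x lam = qp (m+n+1) (real n * of_int k / 2) * y (x * qp (m+n+1) (- of_int k)) (lam * qp (m+n+1) (of_int k))"

definition Phi :: "nat \<Rightarrow> nat \<Rightarrow> (complex \<Rightarrow> complex \<Rightarrow> complex) \<Rightarrow> int \<Rightarrow> complex \<Rightarrow> complex \<Rightarrow> complex mat" where
  "Phi n m y k x lam = mat (n+1) (n+1) (\<lambda>(i,j). (deriv ^^ i) (\<lambda>z. yk n m y (k + int j) z lam) x)"

text \<open>T^(1)_l(lam) built from S^(l)_(1,1); S l lam is the Stokes matrix S^(l)(lam) = S^(l)_0.\<close>
definition T1 :: "nat \<Rightarrow> (nat \<Rightarrow> complex \<Rightarrow> complex mat) \<Rightarrow> int \<Rightarrow> complex \<Rightarrow> complex" where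
  "T1 N S l lam = (if l < 0 then 0 else if l = 0 then 1
      else S (nat l) (lam * qp N (- (of_int l - 1) / 2)) $$ (0,0))"

text \<open>T^(a)_1(lam) = (-1)^(a+1) tau^(a)(lam q^(-(a-1)/2)), tau^(a) = S^(1)_(a,1).\<close>
definition Ta1 :: "nat \<Rightarrow> (nat \<Rightarrow> complex \<Rightarrow> complex mat) \<Rightarrow> nat \<Rightarrow> complex \<Rightarrow> complex" where
  "Ta1 N S a lam = (-1) ^ (a+1) * (S 1 (lam * qp N (- (real a - 1) / 2)) $$ (a - 1, 0))"

end

theory Submission
  imports Defs
begin

(* Only the first row of Phi_0 = Phi_l S^(l) matters: it expands y_j in the basis
   y_l, ..., y_(l+n), with coefficients that are unique by linear independence, and the
   rotation symmetry of the y_k gives S^(l)_k = S^(l)(lam q^k).  Uniqueness makes S^(1)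
   a companion-type matrix (columns 2, ..., n+1 are unit vectors, the first one is tau),
   so S^(l+1)(lam) = S^(1)(lam q^l) S^(l)(lam) on first columns.  Unrolling this yields
   the linear recurrence T_l(lam) = sum_c tau^(c)(lam q^(l-c)) T_(l-c)(lam) for
   T_l = S^(l)_(1,1).  The matrix of the theorem is lower Hessenberg with unit
   subdiagonal, and the recurrence writes its last column as a combination of the
   others plus tau^(a) in the top entry; expanding along that column leaves
   (-1)^(a+1) tau^(a). *)

lemma det_unit_upper_triangular:
  fixes A :: "'a :: comm_ring_1 mat"
  assumes A: "A \<in> carrier_mat n n" and "upper_triangular A" and "\<And>i. i < n \<Longrightarrow> A $$ (i,i) = 1"
  shows "det A = 1"
proof -
  have "det A = prod_list (diag_mat A)" using det_upper_triangular assms(2) A by blast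
  also have "\<dots> = 1" using assms(3) A by (simp add: prod_list_diag_prod)
  finally show ?thesis .
qed

text \<open>Subtracting the combination from the last column leaves t in the top corner and
  a unit upper triangular minor below it.\<close>
lemma det_hessenberg_last_column:
  fixes F :: "nat \<Rightarrow> nat \<Rightarrow> 'a :: comm_ring_1"
  assumes a: "a \<ge> 1"
    and below_subdiag: "\<And>i j. j + 1 < i \<Longrightarrow> F i j = 0"
    and subdiag: "\<And>j. F (Suc j) j = 1"
    and last_col: "\<And>i. i < a \<Longrightarrow> F i (a-1) = (\<Sum>k<a-1. c k * F i k) + (if i = 0 then t else 0)"
  shows "det (mat a a (\<lambda>(i,j). F i j)) = (-1)^(a-1) * t"
proof -
  define M' where "M' = mat a a (\<lambda>(i,j). if j = a-1 then (if i = 0 then t else 0) else F i j)"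
  define U where "U = mat a a (\<lambda>(i,j). if i = j then 1 else if j = a-1 \<and> i < a-1 then c i else 0)"
  have carrier: "M' \<in> carrier_mat a a" "U \<in> carrier_mat a a" unfolding M'_def U_def by auto
  have factor: "mat a a (\<lambda>(i,j). F i j) = M' * U"
  proof (rule eq_matI)
    fix i j assume "i < dim_row (M' * U)" and "j < dim_col (M' * U)"
    hence i: "i < a" and j: "j < a" unfolding M'_def U_def by auto
    have prod: "(M' * U) $$ (i,j) = (\<Sum>k<a. M' $$ (i,k) * U $$ (k,j))"
      using i j carrier by (auto simp: scalar_prod_def atLeast0LessThan)
    show "mat a a (\<lambda>(i,j). F i j) $$ (i,j) = (M' * U) $$ (i,j)"
    proof (cases "j = a-1")
      case True
      obtain b where b: "a = Suc b" using a by (cases a) auto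
      have "(\<Sum>k<a. M' $$ (i,k) * U $$ (k,j)) = (\<Sum>k<a-1. M' $$ (i,k) * U $$ (k,j)) + M' $$ (i,a-1)"
        using True by (simp add: b U_def)
      also have "\<dots> = F i (a-1)"
        using True i j last_col[OF i] by (auto simp: M'_def U_def mult.commute intro!: sum.cong)
      finally show ?thesis using prod True i j by simp
    next
      case False
      have "(\<Sum>k<a. M' $$ (i,k) * U $$ (k,j)) = (\<Sum>k<a. if k = j then M' $$ (i,k) else 0)"
        using False j by (intro sum.cong) (auto simp: U_def)
      then show ?thesis using prod False i j by (simp add: M'_def)
    qed
  qed (auto simp: M'_def U_def)
  have "det U = 1"
    by (rule det_unit_upper_triangular[OF carrier(2)]) (auto simp: U_def upper_triangular_def)
  moreover have "det M' = (-1)^(a-1) * t"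
  proof -
    have minor: "mat_delete M' 0 (a-1) = mat (a-1) (a-1) (\<lambda>(i,j). F (Suc i) j)"
      by (rule eq_matI) (auto simp: mat_delete_def M'_def)
    have "det (mat (a-1) (a-1) (\<lambda>(i,j). F (Suc i) j)) = 1"
      by (rule det_unit_upper_triangular) (auto simp: upper_triangular_def subdiag intro: below_subdiag)
    then have "cofactor M' 0 (a-1) = (-1)^(a-1)" unfolding cofactor_def minor by simp
    moreover have "det M' = (\<Sum>i<a. M' $$ (i,a-1) * cofactor M' i (a-1))"
      using laplace_expansion_column[OF carrier(1)] a by simp
    moreover have "\<dots> = (\<Sum>i<a. if i = 0 then t * cofactor M' 0 (a-1) else 0)"
      by (intro sum.cong) (auto simp: M'_def)
    moreover have "\<dots> = t * cofactor M' 0 (a-1)"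
      using a by simp
    ultimately show ?thesis by (simp add: mult.commute)
  qed
  ultimately show ?thesis by (simp add: factor det_mult[OF carrier])
qed

lemma qp_add: "qp N a * qp N b = qp N (a + b)"
  unfolding qp_def by (simp add: exp_add[symmetric] add_divide_distrib distrib_left distrib_right)

lemma qp_zero [simp]: "qp N 0 = 1"
  unfolding qp_def by simp

lemma mult_qp_qp: "z * qp N a * qp N b = z * qp N (a + b)"
  by (simp add: mult.assoc qp_add)

lemma yk_add:
  "yk n m y (k + j) x lam = qp (m+n+1) (real n * of_int k / 2) *
     yk n m y j (x * qp (m+n+1) (- of_int k)) (lam * qp (m+n+1) (of_int k))"
proof -
  let ?Q = "qp (m+n+1)"
  have factor: "?Q (real n * of_int (k+j) / 2) = ?Q (real n * of_int k / 2) * ?Q (real n * of_int j / 2)"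
    by (simp add: qp_add distrib_left add_divide_distrib)
  have point: "x * ?Q (- of_int (k+j)) = x * ?Q (- of_int k) * ?Q (- of_int j)"
    by (simp add: mult_qp_qp)
  have param: "lam * ?Q (of_int (k+j)) = lam * ?Q (of_int k) * ?Q (of_int j)"
    by (simp add: mult_qp_qp)
  show ?thesis unfolding yk_def factor point param by (simp add: mult.assoc)
qed

lemma Phi_first_row: "j \<le> n \<Longrightarrow> Phi n m y k x lam $$ (0,j) = yk n m y (k + int j) x lam"
  by (simp add: Phi_def)

lemma yk_expansion:
  assumes A: "A \<in> carrier_mat (n+1) (n+1)"
    and Phi_eq: "Phi n m y 0 x lam = Phi n m y (int l) x lam * A"
    and j: "j \<le> n"
  shows "yk n m y (int j) x lam = (\<Sum>i\<le>n. A $$ (i,j) * yk n m y (int l + int i) x lam)"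
proof -
  have "yk n m y (int j) x lam = Phi n m y 0 x lam $$ (0,j)"
    using Phi_first_row[OF j, of m y 0] by simp
  also have "\<dots> = (Phi n m y (int l) x lam * A) $$ (0,j)"
    by (simp add: Phi_eq)
  also have "\<dots> = (\<Sum>i<n+1. Phi n m y (int l) x lam $$ (0,i) * A $$ (i,j))"
    using A j by (simp add: Phi_def scalar_prod_def atLeast0LessThan)
  finally show ?thesis by (simp add: Phi_first_row lessThan_Suc_atMost mult.commute)
qed

lemma yk_expansion_rotated:
  assumes A: "\<And>lam. A lam \<in> carrier_mat (n+1) (n+1)"
    and Phi_eq: "\<And>x lam. Phi n m y 0 x lam = Phi n m y (int l) x lam * A lam"
    and j: "j \<le> n"
  shows "yk n m y (k + int j) x lam =
    (\<Sum>i\<le>n. A (lam * qp (m+n+1) (of_int k)) $$ (i,j) * yk n m y (k + int l + int i) x lam)"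
proof -
  define c where "c = qp (m+n+1) (real n * of_int k / 2)"
  define x' where "x' = x * qp (m+n+1) (- of_int k)"
  define lam' where "lam' = lam * qp (m+n+1) (of_int k)"
  have "yk n m y (k + int j) x lam = c * yk n m y (int j) x' lam'"
    unfolding c_def x'_def lam'_def by (rule yk_add)
  also have "\<dots> = c * (\<Sum>i\<le>n. A lam' $$ (i,j) * yk n m y (int l + int i) x' lam')"
    using yk_expansion[OF A Phi_eq j] by simp
  also have "\<dots> = (\<Sum>i\<le>n. A lam' $$ (i,j) * (c * yk n m y (int l + int i) x' lam'))"
    by (simp add: sum_distrib_left mult.left_commute)
  also have "\<dots> = (\<Sum>i\<le>n. A lam' $$ (i,j) * yk n m y (k + int l + int i) x lam)"
    unfolding c_def x'_def lam'_def by (simp add: yk_add add.assoc)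
  finally show ?thesis unfolding lam'_def .
qed

definition stokes11 :: "(nat \<Rightarrow> complex \<Rightarrow> complex mat) \<Rightarrow> int \<Rightarrow> complex \<Rightarrow> complex" where
  "stokes11 S l lam = (if l < 0 then 0 else if l = 0 then 1 else S (nat l) lam $$ (0,0))"

text \<open>The Stokes multiplier tau^(a), with the paper's 1-based row index a.\<close>
definition stokes_multiplier :: "(nat \<Rightarrow> complex \<Rightarrow> complex mat) \<Rightarrow> nat \<Rightarrow> complex \<Rightarrow> complex" where
  "stokes_multiplier S a lam = S 1 lam $$ (a - 1, 0)"

lemma T1_eq_stokes11: "T1 N S l mu = stokes11 S l (mu * qp N (- (of_int l - 1) / 2))"
  by (simp add: T1_def stokes11_def)

lemma Ta1_eq_stokes_multiplier:
  "Ta1 N S a lam = (-1) ^ (a+1) * stokes_multiplier S a (lam * qp N (- (real a - 1) / 2))"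
  by (simp add: Ta1_def stokes_multiplier_def)

text \<open>Y k stands for y_k; the assumption expansion is the first row of
  Phi_k = Phi_(k+l) S^(l)(lam q^k).\<close>
locale stokes_family =
  fixes n N :: nat
    and Y :: "int \<Rightarrow> 'x \<Rightarrow> complex \<Rightarrow> complex"
    and S :: "nat \<Rightarrow> complex \<Rightarrow> complex mat"
  assumes independent: "\<And>k lam c. (\<forall>x. (\<Sum>j\<le>n. c j * Y (k + int j) x lam) = 0) \<Longrightarrow> \<forall>j\<le>n. c j = 0"
    and expansion: "\<And>k l j x lam. l \<ge> 1 \<Longrightarrow> j \<le> n \<Longrightarrow>
      Y (k + int j) x lam = (\<Sum>i\<le>n. S l (lam * qp N (of_int k)) $$ (i,j) * Y (k + int l + int i) x lam)"
begin

lemma expansion_coeffs_unique: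
  assumes "\<And>x. (\<Sum>i\<le>n. c i * Y (k + int i) x lam) = (\<Sum>i\<le>n. d i * Y (k + int i) x lam)"
    and "i \<le> n"
  shows "c i = d i"
proof -
  have "\<forall>x. (\<Sum>j\<le>n. (c j - d j) * Y (k + int j) x lam) = 0"
    using assms(1) by (simp add: left_diff_distrib sum_subtractf)
  with independent assms(2) show ?thesis by fastforce
qed

lemma stokes1_shift_column:
  assumes j: "1 \<le> j" "j \<le> n" and i: "i \<le> n"
  shows "S 1 lam $$ (i,j) = (if i = j - 1 then 1 else 0)"
proof (rule expansion_coeffs_unique[where k = 1 and lam = lam, OF _ i])
  fix x
  have "(\<Sum>i\<le>n. S 1 lam $$ (i,j) * Y (1 + int i) x lam) = Y (int j) x lam"
    using expansion[of 1 j 0 x lam] j by simp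
  also have "\<dots> = (\<Sum>i\<le>n. (if i = j - 1 then 1 else 0) * Y (1 + int i) x lam)"
    using j by (simp add: if_distrib[of "\<lambda>c. c * _"] cong: if_cong)
  finally show "(\<Sum>i\<le>n. S 1 lam $$ (i,j) * Y (1 + int i) x lam) =
      (\<Sum>i\<le>n. (if i = j - 1 then 1 else 0) * Y (1 + int i) x lam)" .
qed

lemma stokes_compose_first_column:
  assumes l: "l \<ge> 1" and r: "r \<le> n"
  shows "S (Suc l) lam $$ (r,0) = (\<Sum>i\<le>n. S 1 (lam * qp N (real l)) $$ (r,i) * S l lam $$ (i,0))"
proof (rule expansion_coeffs_unique[where k = "int l + 1" and lam = lam, OF _ r])
  fix x
  let ?S1 = "S 1 (lam * qp N (real l))" and ?Y = "\<lambda>r. Y (int l + 1 + int r) x lam"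
  have "(\<Sum>r\<le>n. S (Suc l) lam $$ (r,0) * ?Y r) = Y 0 x lam"
    using expansion[of "Suc l" 0 0 x lam] by (simp add: ac_simps)
  also have "\<dots> = (\<Sum>i\<le>n. S l lam $$ (i,0) * Y (int l + int i) x lam)"
    using expansion[of l 0 0 x lam] l by simp
  also have "\<dots> = (\<Sum>i\<le>n. S l lam $$ (i,0) * (\<Sum>r\<le>n. ?S1 $$ (r,i) * ?Y r))"
    using expansion[of 1 _ "int l" x lam] by (intro sum.cong) (simp_all add: ac_simps)
  also have "\<dots> = (\<Sum>i\<le>n. \<Sum>r\<le>n. S l lam $$ (i,0) * ?S1 $$ (r,i) * ?Y r)"
    by (simp add: sum_distrib_left mult.assoc)
  also have "\<dots> = (\<Sum>r\<le>n. \<Sum>i\<le>n. S l lam $$ (i,0) * ?S1 $$ (r,i) * ?Y r)"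
    by (rule sum.swap)
  also have "\<dots> = (\<Sum>r\<le>n. (\<Sum>i\<le>n. ?S1 $$ (r,i) * S l lam $$ (i,0)) * ?Y r)"
    by (intro sum.cong refl) (simp add: sum_distrib_left sum_distrib_right mult_ac)
  finally show "(\<Sum>r\<le>n. S (Suc l) lam $$ (r,0) * ?Y r) =
      (\<Sum>r\<le>n. (\<Sum>i\<le>n. ?S1 $$ (r,i) * S l lam $$ (i,0)) * ?Y r)" .
qed

lemma stokes_Suc_first_column:
  assumes l: "l \<ge> 1" and r: "r \<le> n"
  shows "S (Suc l) lam $$ (r,0) =
    stokes_multiplier S (r+1) (lam * qp N (real l)) * stokes11 S (int l) lam
    + (if r < n then S l lam $$ (r+1,0) else 0)"
proof -
  let ?S1 = "S 1 (lam * qp N (real l))"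
  have "{..n} = insert 0 {1..n}" by auto
  then have "S (Suc l) lam $$ (r,0) =
      ?S1 $$ (r,0) * S l lam $$ (0,0) + (\<Sum>i\<in>{1..n}. ?S1 $$ (r,i) * S l lam $$ (i,0))"
    using stokes_compose_first_column[OF l r] by simp
  also have "(\<Sum>i\<in>{1..n}. ?S1 $$ (r,i) * S l lam $$ (i,0)) =
      (\<Sum>i\<in>{1..n}. if i = r+1 then S l lam $$ (i,0) else 0)"
  proof (intro sum.cong refl)
    fix i assume "i \<in> {1..n}"
    then show "?S1 $$ (r,i) * S l lam $$ (i,0) = (if i = r+1 then S l lam $$ (i,0) else 0)"
      using stokes1_shift_column[of i r] r by auto
  qed
  finally show ?thesis using l by (simp add: stokes_multiplier_def stokes11_def)
qed

lemma stokes_first_column: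
  assumes "l \<ge> 1" and "r \<le> n"
  shows "S l lam $$ (r,0) = (\<Sum>c\<in>{r+1..n+1}.
    stokes_multiplier S c (lam * qp N (real (l + r) - real c)) * stokes11 S (int (l + r) - int c) lam)"
  using assms
proof (induction l arbitrary: r rule: nat_induct_at_least)
  case base
  have "(\<Sum>c\<in>{r+1..n+1}. stokes_multiplier S c (lam * qp N (real (1 + r) - real c))
          * stokes11 S (int (1 + r) - int c) lam)
      = (\<Sum>c\<in>{r+1..n+1}. if c = r+1 then S 1 lam $$ (r,0) else 0)"
    by (intro sum.cong) (auto simp: stokes11_def stokes_multiplier_def)
  then show ?case using base.prems by simp
next
  case (Suc l)
  define f where "f c = stokes_multiplier S c (lam * qp N (real (Suc l + r) - real c))
      * stokes11 S (int (Suc l + r) - int c) lam" for c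
  have "sum f {r+1..n+1} = f (r+1) + sum f {Suc (r+1)..n+1}"
    using Suc.prems by (intro sum.atLeast_Suc_atMost) simp
  moreover have "sum f {Suc (r+1)..n+1} = (if r < n then S l lam $$ (r+1,0) else 0)"
    using Suc.IH[of "r+1"] by (simp add: f_def)
  ultimately show ?case
    using stokes_Suc_first_column[OF Suc.hyps Suc.prems] by (simp add: f_def)
qed

lemma stokes11_recurrence:
  assumes "l \<ge> 1"
  shows "stokes11 S (int l) lam = (\<Sum>c\<in>{1..n+1}.
    stokes_multiplier S c (lam * qp N (real l - real c)) * stokes11 S (int l - int c) lam)"
  using stokes_first_column[OF assms, of 0] assms by (simp add: stokes11_def)

lemma stokes11_last_column:
  assumes a: "1 \<le> a" "a \<le> n+1" and i: "i < a"
  shows "stokes11 S (1 - int i + int (a-1)) (p * qp N (real i)) =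
    (\<Sum>k<a-1. stokes_multiplier S (a-1-k) (p * qp N (real k + 1))
       * stokes11 S (1 - int i + int k) (p * qp N (real i)))
    + (if i = 0 then stokes_multiplier S a p else 0)"
proof -
  define g where "g c = stokes_multiplier S c (p * qp N (real i) * qp N (real (a-i) - real c))
      * stokes11 S (int (a-i) - int c) (p * qp N (real i))" for c
  have "1 - int i + int (a-1) = int (a-i)" using a i by simp
  then have "stokes11 S (1 - int i + int (a-1)) (p * qp N (real i)) = sum g {1..n+1}"
    using stokes11_recurrence[of "a-i" "p * qp N (real i)"] i by (simp add: g_def)
  also have "{1..n+1} = {1..a-1} \<union> ({a} \<union> {a+1..n+1})" using a by auto
  also have "sum g \<dots> = sum g {1..a-1} + (g a + sum g {a+1..n+1})"
    by (subst sum.union_disjoint, auto)+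
  also have "sum g {a+1..n+1} = 0"
    unfolding g_def by (intro sum.neutral) (auto simp: stokes11_def)
  also have "g a = (if i = 0 then stokes_multiplier S a p else 0)"
    unfolding g_def using i by (auto simp: mult_qp_qp stokes11_def)
  also have "sum g {1..a-1} = (\<Sum>k<a-1. g (a-1-k))"
    by (rule sum.reindex_bij_witness[where i = "\<lambda>c. a-1-c" and j = "\<lambda>k. a-1-k"]) auto
  also have "\<dots> = (\<Sum>k<a-1. stokes_multiplier S (a-1-k) (p * qp N (real k + 1))
       * stokes11 S (1 - int i + int k) (p * qp N (real i)))"
  proof (intro sum.cong refl)
    fix k assume k: "k \<in> {..<a-1}"
    have param: "p * qp N (real i) * qp N (real (a-i) - real (a-1-k)) = p * qp N (real k + 1)"
      using k i by (simp add: mult_qp_qp add.commute)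
    have index: "int (a-i) - int (a-1-k) = 1 - int i + int k" using k i by simp
    show "g (a-1-k) = stokes_multiplier S (a-1-k) (p * qp N (real k + 1))
       * stokes11 S (1 - int i + int k) (p * qp N (real i))"
      unfolding g_def param index ..
  qed
  finally show ?thesis by simp
qed

theorem Ta1_eq_det:
  assumes a: "1 \<le> a" "a \<le> n+1"
  shows "Ta1 N S a lam = det (mat a a (\<lambda>(i,j).
    T1 N S (1 - int i + int j) (lam * qp N ((real i + real j + 1 - real a) / 2))))"
proof -
  define p where "p = lam * qp N (- (real a - 1) / 2)"
  have "lam * qp N ((real i + real j + 1 - real a) / 2) * qp N (- (of_int (1 - int i + int j) - 1) / 2)
      = p * qp N (real i)" for i j
    unfolding p_def mult_qp_qp by (simp add: field_simps)
  then have entries: "(\<lambda>(i,j). T1 N S (1 - int i + int j) (lam * qp N ((real i + real j + 1 - real a) / 2)))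
      = (\<lambda>(i,j). stokes11 S (1 - int i + int j) (p * qp N (real i)))"
    by (simp add: T1_eq_stokes11)
  have "det (mat a a (\<lambda>(i,j). stokes11 S (1 - int i + int j) (p * qp N (real i))))
      = (-1)^(a-1) * stokes_multiplier S a p"
  proof (rule det_hessenberg_last_column[OF a(1)])
    show "stokes11 S (1 - int i + int (a-1)) (p * qp N (real i)) =
      (\<Sum>k<a-1. stokes_multiplier S (a-1-k) (p * qp N (real k + 1))
         * stokes11 S (1 - int i + int k) (p * qp N (real i)))
      + (if i = 0 then stokes_multiplier S a p else 0)" if "i < a" for i
      using stokes11_last_column[OF a that] .
  qed (simp_all add: stokes11_def)
  moreover have "Ta1 N S a lam = (-1)^(a-1) * stokes_multiplier S a p"
    using a by (cases a) (simp_all add: Ta1_eq_stokes_multiplier p_def)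
  ultimately show ?thesis unfolding entries by simp
qed

end

theorem mainTheorem3:
  fixes n m :: nat
    and y :: "complex \<Rightarrow> complex \<Rightarrow> complex"
    and S :: "nat \<Rightarrow> complex \<Rightarrow> complex mat"
  assumes n: "n \<ge> 1" and m: "m \<ge> 1"
    and diff: "\<And>lam i x. i \<le> n \<Longrightarrow> ((deriv ^^ i) (\<lambda>z. y z lam)) field_differentiable (at x)"
    and ode: "\<And>lam x. (deriv ^^ (n+1)) (\<lambda>z. y z lam) x
                 + (-1) ^ n * (x ^ m + lam ^ (n+1)) * y x lam = 0"
    and indep: "\<And>k lam c. (\<forall>x. (\<Sum>j\<le>n. c j * yk n m y (k + int j) x lam) = 0)
                 \<Longrightarrow> (\<forall>j\<le>n. c j = 0)"
    and S_carrier: "\<And>l lam. l \<ge> 1 \<Longrightarrow> S l lam \<in> carrier_mat (n+1) (n+1)"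
    and S_def: "\<And>l lam x. l \<ge> 1 \<Longrightarrow> Phi n m y 0 x lam = Phi n m y (int l) x lam * S l lam"
  shows "\<forall>a lam. 1 \<le> a \<and> a \<le> n+1 \<longrightarrow>
           Ta1 (m+n+1) S a lam =
           Determinant.det (mat a a (\<lambda>(i,j). T1 (m+n+1) S (1 - int i + int j)
                   (lam * qp (m+n+1) ((real i + real j + 1 - real a) / 2))))"
proof -
  interpret stokes_family n "m+n+1" "yk n m y" S
  proof
    show "\<forall>j\<le>n. c j = 0" if "\<forall>x. (\<Sum>j\<le>n. c j * yk n m y (k + int j) x lam) = 0" for k lam c
      using indep that .
    show "yk n m y (k + int j) x lam = (\<Sum>i\<le>n. S l (lam * qp (m+n+1) (of_int k)) $$ (i,j)
        * yk n m y (k + int l + int i) x lam)" if "l \<ge> 1" "j \<le> n" for k l j x lam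
      using yk_expansion_rotated[OF S_carrier[OF that(1)] S_def[OF that(1)] that(2)] .
  qed
  show ?thesis using Ta1_eq_det by blast
qed

end
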